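(* The identities (A13) $(x\wedge y)\wedge z\approx (y\wedge z)\wedge x$, (J5') $x\approx (x'\wedge y)'\wedge(x'\wedge y')'$ form a 2-base for the variety $\mathbb{BA}$ of Boolean algebras (in the language $\langle\wedge,{}'\rangle$).
   Context: Algebras are of type $\langle \wedge, {}'\rangle$ with $\wedge$ binary and ${}'$ unary. The variety $\mathbb{BA}$ of Boolean algebras in this language consists of the algebras $\langle B,\wedge,{}'\rangle$ obtained from Boolean algebras by keeping only meet and complement (equivalently, the variety generated by the two-element Boolean algebra with meet and complement). A base for a variety is an independent set of identities (no identity in the set follows from the others) that defines the variety; an $n$-base is a base with exactly $n$ identities. *)

theory Defs
  imports Main
begin

datatype bterm = Var nat | Meet bterm bterm | Cpl bterm

type_synonym identity = "bterm \<times> bterm"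

fun subst :: "(nat \<Rightarrow> bterm) \<Rightarrow> bterm \<Rightarrow> bterm" where
  "subst \<sigma> (Var i) = \<sigma> i"
| "subst \<sigma> (Meet s t) = Meet (subst \<sigma> s) (subst \<sigma> t)"
| "subst \<sigma> (Cpl s) = Cpl (subst \<sigma> s)"

fun eval2 :: "(nat \<Rightarrow> bool) \<Rightarrow> bterm \<Rightarrow> bool" where
  "eval2 v (Var i) = v i"
| "eval2 v (Meet s t) = (eval2 v s \<and> eval2 v t)"
| "eval2 v (Cpl s) = (\<not> eval2 v s)"

text \<open>An identity holds in the variety BA iff it holds in the two-element
  Boolean algebra (BA is generated by it).\<close>
definition holds_in_BA :: "identity \<Rightarrow> bool" where
  "holds_in_BA e \<longleftrightarrow> (\<forall>v. eval2 v (fst e) = eval2 v (snd e))"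

inductive derivable :: "identity set \<Rightarrow> bterm \<Rightarrow> bterm \<Rightarrow> bool"
  for \<Sigma> :: "identity set" where
  ax: "(s, t) \<in> \<Sigma> \<Longrightarrow> derivable \<Sigma> (subst \<sigma> s) (subst \<sigma> t)"
| refl: "derivable \<Sigma> t t"
| sym: "derivable \<Sigma> s t \<Longrightarrow> derivable \<Sigma> t s"
| trans: "derivable \<Sigma> s t \<Longrightarrow> derivable \<Sigma> t u \<Longrightarrow> derivable \<Sigma> s u"
| cong_meet: "derivable \<Sigma> s1 t1 \<Longrightarrow> derivable \<Sigma> s2 t2 \<Longrightarrow>
     derivable \<Sigma> (Meet s1 s2) (Meet t1 t2)"
| cong_cpl: "derivable \<Sigma> s t \<Longrightarrow> derivable \<Sigma> (Cpl s) (Cpl t)"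

definition defines_BA :: "identity set \<Rightarrow> bool" where
  "defines_BA \<Sigma> \<longleftrightarrow> (\<forall>s t. derivable \<Sigma> s t \<longleftrightarrow> holds_in_BA (s, t))"

definition independent :: "identity set \<Rightarrow> bool" where
  "independent \<Sigma> \<longleftrightarrow> (\<forall>e\<in>\<Sigma>. \<not> derivable (\<Sigma> - {e}) (fst e) (snd e))"

definition is_n_base_BA :: "nat \<Rightarrow> identity set \<Rightarrow> bool" where
  "is_n_base_BA n \<Sigma> \<longleftrightarrow> finite \<Sigma> \<and> card \<Sigma> = n \<and> defines_BA \<Sigma> \<and> independent \<Sigma>"

abbreviation "vx \<equiv> Var 0"
abbreviation "vy \<equiv> Var 1"
abbreviation "vz \<equiv> Var 2"

definition A13 :: identity where
  "A13 = (Meet (Meet vx vy) vz, Meet (Meet vy vz) vx)"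

definition J5' :: identity where
  "J5' = (vx, Meet (Cpl (Meet (Cpl vx) vy)) (Cpl (Meet (Cpl vx) (Cpl vy))))"

end

theory Submission
  imports Defs
begin

(*
  Soundness and independence are checked in small models: the two-element Boolean algebra
  satisfies A13 and J5'; the left projection (meet x y = x, complement the identity) satisfies
  J5' but not A13; the constant meet False (complement the identity) satisfies A13 but not J5'.

  For completeness: A13 says that a triple meet is invariant under cyclic shifts, and J5' makes
  every element a meet; together these force the meet to be commutative and associative. J5'
  is then Huntington's axiom in meet form, which yields the Boolean laws, and Shannon expansion
  in one variable at a time reduces every identity to its truth table. Applied to the Lindenbaum
  algebra of {A13, J5'}, this shows that every identity of BA is derivable.
*)

primrec term_eval :: "('a \<Rightarrow> 'a \<Rightarrow> 'a) \<Rightarrow> ('a \<Rightarrow> 'a) \<Rightarrow> (nat \<Rightarrow> 'a) \<Rightarrow> bterm \<Rightarrow> 'a" where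
  "term_eval meet compl w (Var i) = w i"
| "term_eval meet compl w (Meet s t) = meet (term_eval meet compl w s) (term_eval meet compl w t)"
| "term_eval meet compl w (Cpl s) = compl (term_eval meet compl w s)"

lemma term_eval_subst:
  "term_eval meet compl w (subst \<sigma> t) = term_eval meet compl (\<lambda>i. term_eval meet compl w (\<sigma> i)) t"
  by (induction t) auto

lemma derivable_sound:
  assumes "derivable \<Sigma> s t"
    and "\<And>l r w. (l, r) \<in> \<Sigma> \<Longrightarrow> term_eval meet compl w l = term_eval meet compl w r"
  shows "term_eval meet compl w s = term_eval meet compl w t"
  using assms(1)
proof (induction arbitrary: w rule: derivable.induct)
  case (ax l r \<sigma>)
  then show ?case using assms(2) by (simp add: term_eval_subst)
qed auto

lemma eval2_eq_term_eval: "eval2 v t = term_eval (\<and>) Not v t"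
  by (induction t) auto

primrec vars :: "bterm \<Rightarrow> nat set" where
  "vars (Var i) = {i}"
| "vars (Meet s t) = vars s \<union> vars t"
| "vars (Cpl s) = vars s"

lemma finite_vars: "finite (vars t)"
  by (induction t) auto

lemma term_eval_cong:
  "(\<And>i. i \<in> vars t \<Longrightarrow> v i = w i) \<Longrightarrow> term_eval meet compl v t = term_eval meet compl w t"
  by (induction t) auto

locale cyclic_magma =
  fixes meet :: "'a \<Rightarrow> 'a \<Rightarrow> 'a"  (infixl "\<^bold>\<sqinter>" 70)
  assumes cyclic: "(x \<^bold>\<sqinter> y) \<^bold>\<sqinter> z = (y \<^bold>\<sqinter> z) \<^bold>\<sqinter> x"
    and ex_meet_eq: "\<exists>a b. x = a \<^bold>\<sqinter> b"
begin

lemma right_nested_swap: "x \<^bold>\<sqinter> (y \<^bold>\<sqinter> z) = z \<^bold>\<sqinter> (y \<^bold>\<sqinter> x)"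
  by (metis cyclic ex_meet_eq)

lemma right_nested_left_commute: "x \<^bold>\<sqinter> (y \<^bold>\<sqinter> z) = y \<^bold>\<sqinter> (x \<^bold>\<sqinter> z)"
  by (metis cyclic ex_meet_eq right_nested_swap)

sublocale abel_semigroup "(\<^bold>\<sqinter>)"
proof
  show commute: "x \<^bold>\<sqinter> y = y \<^bold>\<sqinter> x" for x y
  proof -
    obtain a b c d where "x = a \<^bold>\<sqinter> b" and "y = c \<^bold>\<sqinter> d"
      using ex_meet_eq by meson
    \<comment> \<open>Both sides are right-nested meets of a, b, c, d, which are symmetric in all four.\<close>
    then show ?thesis
      by (metis right_nested_swap right_nested_left_commute)
  qed
  show "(x \<^bold>\<sqinter> y) \<^bold>\<sqinter> z = x \<^bold>\<sqinter> (y \<^bold>\<sqinter> z)" for x y z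
    by (metis cyclic commute)
qed

end

locale huntington_algebra = abel_semigroup meet
  for meet :: "'a \<Rightarrow> 'a \<Rightarrow> 'a"  (infixl "\<^bold>\<sqinter>" 70) +
  fixes compl :: "'a \<Rightarrow> 'a"  ("\<^bold>- _" [80] 80)
  assumes huntington: "\<^bold>- (\<^bold>- x \<^bold>\<sqinter> y) \<^bold>\<sqinter> \<^bold>- (\<^bold>- x \<^bold>\<sqinter> \<^bold>- y) = x"
begin

lemma meet_compl_compl_meet_double_compl:
  "x \<^bold>\<sqinter> \<^bold>- (\<^bold>- x \<^bold>\<sqinter> \<^bold>- \<^bold>- y) = x \<^bold>\<sqinter> \<^bold>- (\<^bold>- x \<^bold>\<sqinter> y)"
proof -
  have "x \<^bold>\<sqinter> \<^bold>- (\<^bold>- x \<^bold>\<sqinter> \<^bold>- \<^bold>- y)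
      = (\<^bold>- (\<^bold>- x \<^bold>\<sqinter> y) \<^bold>\<sqinter> \<^bold>- (\<^bold>- x \<^bold>\<sqinter> \<^bold>- y)) \<^bold>\<sqinter> \<^bold>- (\<^bold>- x \<^bold>\<sqinter> \<^bold>- \<^bold>- y)"
    by (simp only: huntington)
  also have "\<dots> = \<^bold>- (\<^bold>- x \<^bold>\<sqinter> y) \<^bold>\<sqinter> (\<^bold>- (\<^bold>- x \<^bold>\<sqinter> \<^bold>- y) \<^bold>\<sqinter> \<^bold>- (\<^bold>- x \<^bold>\<sqinter> \<^bold>- \<^bold>- y))"
    by (rule assoc)
  also have "\<dots> = x \<^bold>\<sqinter> \<^bold>- (\<^bold>- x \<^bold>\<sqinter> y)"
    by (simp only: huntington commute)
  finally show ?thesis .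
qed

lemma compl_meet_double_compl: "\<^bold>- x \<^bold>\<sqinter> \<^bold>- \<^bold>- x = x \<^bold>\<sqinter> \<^bold>- x"
proof -
  have "\<^bold>- x \<^bold>\<sqinter> \<^bold>- \<^bold>- x
      = \<^bold>- x \<^bold>\<sqinter> (\<^bold>- (\<^bold>- \<^bold>- \<^bold>- x \<^bold>\<sqinter> \<^bold>- x) \<^bold>\<sqinter> \<^bold>- (\<^bold>- \<^bold>- \<^bold>- x \<^bold>\<sqinter> \<^bold>- \<^bold>- x))"
    by (simp only: huntington)
  also have "\<dots> = \<^bold>- x \<^bold>\<sqinter> \<^bold>- (\<^bold>- \<^bold>- x \<^bold>\<sqinter> \<^bold>- \<^bold>- \<^bold>- x) \<^bold>\<sqinter> \<^bold>- (\<^bold>- x \<^bold>\<sqinter> \<^bold>- \<^bold>- \<^bold>- x)"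
    by (simp only: ac_simps)
  also have "\<dots> = \<^bold>- x \<^bold>\<sqinter> \<^bold>- (\<^bold>- \<^bold>- x \<^bold>\<sqinter> \<^bold>- x) \<^bold>\<sqinter> \<^bold>- (\<^bold>- x \<^bold>\<sqinter> \<^bold>- \<^bold>- \<^bold>- x)"
    by (simp only: meet_compl_compl_meet_double_compl)
  also have "\<dots> = \<^bold>- x \<^bold>\<sqinter> (\<^bold>- (\<^bold>- x \<^bold>\<sqinter> \<^bold>- \<^bold>- x) \<^bold>\<sqinter> \<^bold>- (\<^bold>- x \<^bold>\<sqinter> \<^bold>- \<^bold>- \<^bold>- x))"
    by (simp only: ac_simps)
  also have "\<dots> = \<^bold>- x \<^bold>\<sqinter> x"
    by (simp only: huntington)
  also have "\<dots> = x \<^bold>\<sqinter> \<^bold>- x"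
    by (rule commute)
  finally show ?thesis .
qed

lemma double_compl [simp]: "\<^bold>- \<^bold>- x = x"
proof -
  have "\<^bold>- (x \<^bold>\<sqinter> \<^bold>- \<^bold>- x) \<^bold>\<sqinter> \<^bold>- (x \<^bold>\<sqinter> \<^bold>- x) = \<^bold>- x" for x
    using huntington [of "\<^bold>- x" x] by (simp only: compl_meet_double_compl commute)
  from this [of "\<^bold>- x"] show ?thesis
    by (simp only: huntington commute)
qed

lemma huntington_compl: "\<^bold>- (x \<^bold>\<sqinter> y) \<^bold>\<sqinter> \<^bold>- (x \<^bold>\<sqinter> \<^bold>- y) = \<^bold>- x"
  using huntington [of "\<^bold>- x" y] by simp

lemma meet_compl_meet_compl_commute:
  "x \<^bold>\<sqinter> \<^bold>- (x \<^bold>\<sqinter> \<^bold>- y) = y \<^bold>\<sqinter> \<^bold>- (y \<^bold>\<sqinter> \<^bold>- x)"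
proof -
  have "x \<^bold>\<sqinter> \<^bold>- (x \<^bold>\<sqinter> \<^bold>- y)
      = \<^bold>- (\<^bold>- x \<^bold>\<sqinter> y) \<^bold>\<sqinter> \<^bold>- (\<^bold>- x \<^bold>\<sqinter> \<^bold>- y) \<^bold>\<sqinter> \<^bold>- (x \<^bold>\<sqinter> \<^bold>- y)"
    by (simp only: huntington)
  also have "\<dots> = \<^bold>- (\<^bold>- y \<^bold>\<sqinter> x) \<^bold>\<sqinter> \<^bold>- (\<^bold>- y \<^bold>\<sqinter> \<^bold>- x) \<^bold>\<sqinter> \<^bold>- (y \<^bold>\<sqinter> \<^bold>- x)"
    by (simp only: ac_simps)
  also have "\<dots> = y \<^bold>\<sqinter> \<^bold>- (y \<^bold>\<sqinter> \<^bold>- x)"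
    by (simp only: huntington)
  finally show ?thesis .
qed

lemma meet_compl_self_eq: "x \<^bold>\<sqinter> \<^bold>- x = y \<^bold>\<sqinter> \<^bold>- y"
proof -
  have "x \<^bold>\<sqinter> \<^bold>- x = x \<^bold>\<sqinter> (\<^bold>- (x \<^bold>\<sqinter> \<^bold>- \<^bold>- y) \<^bold>\<sqinter> \<^bold>- (x \<^bold>\<sqinter> \<^bold>- y))"
    by (simp add: huntington_compl)
  also have "\<dots> = \<^bold>- y \<^bold>\<sqinter> \<^bold>- (\<^bold>- y \<^bold>\<sqinter> \<^bold>- x) \<^bold>\<sqinter> \<^bold>- (x \<^bold>\<sqinter> \<^bold>- y)"
    by (simp only: assoc [symmetric] meet_compl_meet_compl_commute)
  also have "\<dots> = \<^bold>- y \<^bold>\<sqinter> (\<^bold>- (\<^bold>- y \<^bold>\<sqinter> x) \<^bold>\<sqinter> \<^bold>- (\<^bold>- y \<^bold>\<sqinter> \<^bold>- x))"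
    by (simp only: ac_simps)
  also have "\<dots> = \<^bold>- y \<^bold>\<sqinter> y"
    by (simp only: huntington)
  also have "\<dots> = y \<^bold>\<sqinter> \<^bold>- y"
    by (rule commute)
  finally show ?thesis .
qed

text \<open>By \<open>meet_compl_self_eq\<close> any element can replace \<^const>\<open>undefined\<close> here.\<close>

definition zero :: 'a  ("\<^bold>0")
  where "\<^bold>0 = undefined \<^bold>\<sqinter> \<^bold>- undefined"

abbreviation one :: 'a  ("\<^bold>1")
  where "\<^bold>1 \<equiv> \<^bold>- \<^bold>0"

lemma meet_compl_self [simp]: "x \<^bold>\<sqinter> \<^bold>- x = \<^bold>0"
  unfolding zero_def by (rule meet_compl_self_eq)

lemma meet_zero [simp]: "x \<^bold>\<sqinter> \<^bold>0 = \<^bold>0"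
proof -
  have "x \<^bold>\<sqinter> x \<^bold>\<sqinter> \<^bold>- x = (x \<^bold>\<sqinter> x) \<^bold>\<sqinter> (\<^bold>- (x \<^bold>\<sqinter> x) \<^bold>\<sqinter> \<^bold>1)"
    using huntington_compl [of x x] by simp
  also have "\<dots> = \<^bold>0"
    by (simp flip: assoc)
  finally show ?thesis
    by (metis assoc meet_compl_self)
qed

lemma meet_one [simp]: "x \<^bold>\<sqinter> \<^bold>1 = x"
proof -
  have "x \<^bold>\<sqinter> \<^bold>1 = \<^bold>1 \<^bold>\<sqinter> \<^bold>- (\<^bold>1 \<^bold>\<sqinter> \<^bold>- x)"
    using meet_compl_meet_compl_commute [of x "\<^bold>1"] by simp
  also have "\<dots> = x"
    using huntington [of x "\<^bold>0"] by (simp add: commute)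
  finally show ?thesis .
qed

lemma meet_idem [simp]: "x \<^bold>\<sqinter> x = x"
proof -
  have "\<^bold>- (\<^bold>- x \<^bold>\<sqinter> \<^bold>- x) = x" for x
    using huntington [of x x] by (metis commute meet_compl_self meet_one)
  from this [of "\<^bold>- x"] have "\<^bold>- (x \<^bold>\<sqinter> x) = \<^bold>- x"
    by simp
  then show ?thesis
    by (metis double_compl)
qed

lemma meet_absorb_compl: "x \<^bold>\<sqinter> \<^bold>- (\<^bold>- x \<^bold>\<sqinter> y) = x"
  by (metis huntington assoc commute meet_idem)

lemma meet_compl_meet: "x \<^bold>\<sqinter> \<^bold>- (x \<^bold>\<sqinter> y) = x \<^bold>\<sqinter> \<^bold>- y"
proof -
  have "x \<^bold>\<sqinter> \<^bold>- y = x \<^bold>\<sqinter> (\<^bold>- (y \<^bold>\<sqinter> x) \<^bold>\<sqinter> \<^bold>- (y \<^bold>\<sqinter> \<^bold>- x))"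
    by (simp only: huntington_compl)
  also have "\<dots> = \<^bold>- (x \<^bold>\<sqinter> y) \<^bold>\<sqinter> (x \<^bold>\<sqinter> \<^bold>- (\<^bold>- x \<^bold>\<sqinter> y))"
    by (simp only: ac_simps)
  also have "\<dots> = x \<^bold>\<sqinter> \<^bold>- (x \<^bold>\<sqinter> y)"
    by (simp only: meet_absorb_compl, rule commute)
  finally show ?thesis ..
qed

lemma shannon_expansion: "x = \<^bold>- (\<^bold>- (a \<^bold>\<sqinter> x) \<^bold>\<sqinter> \<^bold>- (\<^bold>- a \<^bold>\<sqinter> x))"
  using huntington_compl [of x a] by (metis double_compl commute)

lemma compl_meet_self [simp]: "\<^bold>- x \<^bold>\<sqinter> x = \<^bold>0"
  by (metis commute meet_compl_self)

lemma meet_meet_distrib: "a \<^bold>\<sqinter> (x \<^bold>\<sqinter> y) = (a \<^bold>\<sqinter> x) \<^bold>\<sqinter> (a \<^bold>\<sqinter> y)"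
  by (metis assoc commute meet_idem)

lemma meet_term_eval_fun_upd:
  assumes "a \<^bold>\<sqinter> w i = a \<^bold>\<sqinter> u"
  shows "a \<^bold>\<sqinter> term_eval (\<^bold>\<sqinter>) compl w t = a \<^bold>\<sqinter> term_eval (\<^bold>\<sqinter>) compl (w(i := u)) t"
proof (induction t)
  case (Var j)
  then show ?case using assms by simp
next
  case (Meet t1 t2)
  then show ?case by (simp add: meet_meet_distrib [of a])
next
  case (Cpl t)
  then show ?case by (metis term_eval.simps(3) meet_compl_meet)
qed

lemma term_eval_shannon:
  "term_eval (\<^bold>\<sqinter>) compl w t =
    \<^bold>- (\<^bold>- (w i \<^bold>\<sqinter> term_eval (\<^bold>\<sqinter>) compl (w(i := \<^bold>1)) t)
      \<^bold>\<sqinter> \<^bold>- (\<^bold>- w i \<^bold>\<sqinter> term_eval (\<^bold>\<sqinter>) compl (w(i := \<^bold>0)) t))"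
proof -
  have "w i \<^bold>\<sqinter> term_eval (\<^bold>\<sqinter>) compl w t = w i \<^bold>\<sqinter> term_eval (\<^bold>\<sqinter>) compl (w(i := \<^bold>1)) t"
    by (rule meet_term_eval_fun_upd) simp
  moreover have "\<^bold>- w i \<^bold>\<sqinter> term_eval (\<^bold>\<sqinter>) compl w t = \<^bold>- w i \<^bold>\<sqinter> term_eval (\<^bold>\<sqinter>) compl (w(i := \<^bold>0)) t"
    by (rule meet_term_eval_fun_upd) simp
  ultimately show ?thesis
    by (metis shannon_expansion)
qed

lemma term_eval_two_valued:
  assumes "\<And>j. w j = \<^bold>1 \<or> w j = \<^bold>0"
  shows "term_eval (\<^bold>\<sqinter>) compl w t = (if eval2 (\<lambda>j. w j = \<^bold>1) t then \<^bold>1 else \<^bold>0)"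
proof (induction t)
  case (Var j)
  then show ?case using assms [of j] by auto
qed simp_all

lemma term_eval_eq_if_eval2_eq_two_valued_outside:
  assumes "\<And>v. eval2 v s = eval2 v t"
    and "finite F"
    and "\<And>j. j \<notin> F \<Longrightarrow> w j = \<^bold>1 \<or> w j = \<^bold>0"
  shows "term_eval (\<^bold>\<sqinter>) compl w s = term_eval (\<^bold>\<sqinter>) compl w t"
  using assms(2,3)
proof (induction F arbitrary: w rule: finite_induct)
  case empty
  then show ?case by (simp add: term_eval_two_valued assms(1))
next
  case (insert i F)
  have eq: "term_eval (\<^bold>\<sqinter>) compl (w(i := u)) s = term_eval (\<^bold>\<sqinter>) compl (w(i := u)) t"
    if "u = \<^bold>1 \<or> u = \<^bold>0" for u
    using insert.prems that by (intro insert.IH) auto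
  have "term_eval (\<^bold>\<sqinter>) compl w s =
      \<^bold>- (\<^bold>- (w i \<^bold>\<sqinter> term_eval (\<^bold>\<sqinter>) compl (w(i := \<^bold>1)) s)
        \<^bold>\<sqinter> \<^bold>- (\<^bold>- w i \<^bold>\<sqinter> term_eval (\<^bold>\<sqinter>) compl (w(i := \<^bold>0)) s))"
    by (rule term_eval_shannon)
  also have "\<dots> =
      \<^bold>- (\<^bold>- (w i \<^bold>\<sqinter> term_eval (\<^bold>\<sqinter>) compl (w(i := \<^bold>1)) t)
        \<^bold>\<sqinter> \<^bold>- (\<^bold>- w i \<^bold>\<sqinter> term_eval (\<^bold>\<sqinter>) compl (w(i := \<^bold>0)) t))"
    using eq [of "\<^bold>1"] eq [of "\<^bold>0"] by simp
  also have "\<dots> = term_eval (\<^bold>\<sqinter>) compl w t"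
    by (rule term_eval_shannon [symmetric])
  finally show ?case .
qed

lemma term_eval_eq_if_eval2_eq:
  assumes "\<And>v. eval2 v s = eval2 v t"
  shows "term_eval (\<^bold>\<sqinter>) compl w s = term_eval (\<^bold>\<sqinter>) compl w t"
proof -
  define w' where "w' = (\<lambda>j. if j \<in> vars s \<union> vars t then w j else \<^bold>1)"
  have "term_eval (\<^bold>\<sqinter>) compl w' s = term_eval (\<^bold>\<sqinter>) compl w' t"
    by (rule term_eval_eq_if_eval2_eq_two_valued_outside [where F = "vars s \<union> vars t"])
      (simp_all add: assms finite_vars w'_def)
  moreover have "term_eval (\<^bold>\<sqinter>) compl w' r = term_eval (\<^bold>\<sqinter>) compl w r"
    if "r = s \<or> r = t" for r
    by (rule term_eval_cong) (use that in \<open>auto simp: w'_def\<close>)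
  ultimately show ?thesis
    by simp
qed

end

locale A13_J5_algebra =
  fixes meet :: "'a \<Rightarrow> 'a \<Rightarrow> 'a"  (infixl "\<^bold>\<sqinter>" 70)
    and compl :: "'a \<Rightarrow> 'a"  ("\<^bold>- _" [80] 80)
  assumes A13: "(x \<^bold>\<sqinter> y) \<^bold>\<sqinter> z = (y \<^bold>\<sqinter> z) \<^bold>\<sqinter> x"
    and J5': "x = \<^bold>- (\<^bold>- x \<^bold>\<sqinter> y) \<^bold>\<sqinter> \<^bold>- (\<^bold>- x \<^bold>\<sqinter> \<^bold>- y)"
begin

sublocale cyclic_magma "(\<^bold>\<sqinter>)"
  by unfold_locales (rule A13, use J5' in blast)

sublocale huntington_algebra "(\<^bold>\<sqinter>)" compl
  by unfold_locales (rule J5' [symmetric])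

end

lemma equivp_derivable: "equivp (derivable \<Sigma>)"
  by (rule equivpI)
    (auto simp: reflp_def symp_def transp_def intro: derivable.refl derivable.sym derivable.trans)

quotient_type lindenbaum = bterm / "derivable {A13, J5'}"
  by (rule equivp_derivable)

lift_definition lindenbaum_meet :: "lindenbaum \<Rightarrow> lindenbaum \<Rightarrow> lindenbaum" is Meet
  by (rule derivable.cong_meet)

lift_definition lindenbaum_compl :: "lindenbaum \<Rightarrow> lindenbaum" is Cpl
  by (rule derivable.cong_cpl)

lemma A13_J5_algebra_lindenbaum: "A13_J5_algebra lindenbaum_meet lindenbaum_compl"
proof
  fix x y z :: lindenbaum
  show "lindenbaum_meet (lindenbaum_meet x y) z = lindenbaum_meet (lindenbaum_meet y z) x"
  proof transfer
    fix x y z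
    have "derivable {A13, J5'} (subst ((!) [x, y, z]) (fst A13)) (subst ((!) [x, y, z]) (snd A13))"
      by (rule derivable.ax) simp
    then show "derivable {A13, J5'} (Meet (Meet x y) z) (Meet (Meet y z) x)"
      by (simp add: A13_def)
  qed
  show "x = lindenbaum_meet (lindenbaum_compl (lindenbaum_meet (lindenbaum_compl x) y))
             (lindenbaum_compl (lindenbaum_meet (lindenbaum_compl x) (lindenbaum_compl y)))"
  proof transfer
    fix x y
    have "derivable {A13, J5'} (subst ((!) [x, y]) (fst J5')) (subst ((!) [x, y]) (snd J5'))"
      by (rule derivable.ax) simp
    then show "derivable {A13, J5'} x (Meet (Cpl (Meet (Cpl x) y)) (Cpl (Meet (Cpl x) (Cpl y))))"
      by (simp add: J5'_def)
  qed
qed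

lemma term_eval_lindenbaum:
  "term_eval lindenbaum_meet lindenbaum_compl (\<lambda>i. abs_lindenbaum (Var i)) t = abs_lindenbaum t"
  by (induction t) (simp_all add: lindenbaum_meet.abs_eq lindenbaum_compl.abs_eq)

lemma derivable_if_eval2_eq:
  assumes "\<And>v. eval2 v s = eval2 v t"
  shows "derivable {A13, J5'} s t"
proof -
  interpret A13_J5_algebra lindenbaum_meet lindenbaum_compl
    by (rule A13_J5_algebra_lindenbaum)
  have "term_eval lindenbaum_meet lindenbaum_compl (\<lambda>i. abs_lindenbaum (Var i)) s
      = term_eval lindenbaum_meet lindenbaum_compl (\<lambda>i. abs_lindenbaum (Var i)) t"
    using assms by (rule term_eval_eq_if_eval2_eq)
  then show ?thesis
    by (simp add: term_eval_lindenbaum lindenbaum.abs_eq_iff)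
qed

lemma defines_BA_A13_J5': "defines_BA {A13, J5'}"
  unfolding defines_BA_def holds_in_BA_def fst_conv snd_conv
proof (intro allI, rule iffI)
  fix s t
  assume "derivable {A13, J5'} s t"
  then have "term_eval (\<and>) Not v s = term_eval (\<and>) Not v t" for v
    by (rule derivable_sound) (auto simp: A13_def J5'_def)
  then show "\<forall>v. eval2 v s = eval2 v t"
    by (simp add: eval2_eq_term_eval)
next
  fix s t
  assume "\<forall>v. eval2 v s = eval2 v t"
  then show "derivable {A13, J5'} s t"
    by (intro derivable_if_eval2_eq) simp
qed

lemma A13_not_derivable_from_J5': "\<not> derivable {J5'} (fst A13) (snd A13)"
proof
  assume "derivable {J5'} (fst A13) (snd A13)"
  then have "term_eval (\<lambda>x y. x) id (\<lambda>i. i = 0) (fst A13) = term_eval (\<lambda>x y. x) id (\<lambda>i. i = 0) (snd A13)"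
    by (rule derivable_sound) (auto simp: J5'_def)
  then show False
    by (simp add: A13_def)
qed

lemma J5'_not_derivable_from_A13: "\<not> derivable {A13} (fst J5') (snd J5')"
proof
  assume "derivable {A13} (fst J5') (snd J5')"
  then have "term_eval (\<lambda>x y. False) id (\<lambda>i. True) (fst J5') = term_eval (\<lambda>x y. False) id (\<lambda>i. True) (snd J5')"
    by (rule derivable_sound) (auto simp: A13_def)
  then show False
    by (simp add: J5'_def)
qed

lemma A13_neq_J5': "A13 \<noteq> J5'"
  by (simp add: A13_def J5'_def)

lemma independent_A13_J5': "independent {A13, J5'}"
proof -
  have "{A13, J5'} - {A13} = {J5'}" and "{A13, J5'} - {J5'} = {A13}"
    using A13_neq_J5' by auto
  then show ?thesis
    unfolding independent_def using A13_not_derivable_from_J5' J5'_not_derivable_from_A13 by auto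
qed

theorem theorem9p1:
  shows "is_n_base_BA 2 {A13, J5'}"
  unfolding is_n_base_BA_def
  using defines_BA_A13_J5' independent_A13_J5' A13_neq_J5' by simp

end
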